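(* Let $t\ge2$, let $p\ge5$ be a prime, and let $M,N$ be positive integers, $0\le j\le p-1$ and $0\le k\le M-1\le N-1$. Then $$\alpha_t(p,N,j,k)=\alpha_t(p,M,j,k).$$
   Context: $(q)_n=\prod_{k=1}^n(1-q^k)$, $\binom{n}{k}_q=\frac{(q)_n}{(q)_{n-k}(q)_k}$ (zero unless $0\le k\le n$). For $t\ge2$ let $m(t)=2^{t-1}$; $h''(t)=(2^t-1)/3$, $h'(t)=(2^t-4)/3$, $a(t)=(2^{t-1}+1)/3$ if $t$ is even, and $h''(t)=(2^t-2)/3$, $h'(t)=(2^t-5)/3$, $a(t)=(2^t+1)/3$ if $t$ is odd. For an integer $L\ge0$ define the truncation $$\mathscr{F}_t(q;L)=(-1)^{h''(t)}q^{-h'(t)}\sum_{n=0}^{L}(q)_n\sum_{(j_1,\dots,j_{m(t)-1})}q^{\frac{-a(t)+\sum_{\ell}\ell j_\ell}{m(t)}+\sum_{\ell}\binom{j_\ell}{2}}\sum_{k=0}^{m(t)-1}\prod_{\ell=1}^{m(t)-1}\binom{n+I(\ell\le k)}{j_\ell}_q,$$ the middle sum over tuples of nonnegative integers with $3\sum_{\ell=1}^{m(t)-1}\ell j_\ell\equiv1\pmod{m(t)}$ and $I(\ell\le k)=1$ if $\ell\le k$, else $0$; it is a Laurent polynomial in $q$ with integer coefficients. Its $p$-dissection is the unique representation $\mathscr{F}_t(q;L)=\sum_{i=0}^{p-1}q^i\mathcal{A}_{p,t}(L,i,q^p)$ with Laurent polynomials $\mathcal{A}_{p,t}(L,i,x)\in\mathbb{Z}[x,x^{-1}]$.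 For $n\ge1$ define $\alpha_t(p,n,i,k)$ by the power series expansion $\mathcal{A}_{p,t}(pn-1,i,1-q)=\sum_{k\ge0}\alpha_t(p,n,i,k)q^k$. *)

theory Defs
  imports "HOL-Computational_Algebra.Formal_Laurent_Series"
begin

text \<open>All Laurent polynomials in q are modelled as formal Laurent series over the rationals
  (q = fls_X). Their coefficients are integers, but working over a field lets us write the
  q-binomial coefficient literally as the quotient of q-Pochhammer symbols.\<close>

definition qpoch :: "nat \<Rightarrow> rat fls" where
  "qpoch n = (\<Prod>k=1..n. 1 - fls_X ^ k)"

definition qbinom :: "nat \<Rightarrow> nat \<Rightarrow> rat fls" where
  "qbinom n k = (if k \<le> n then qpoch n / (qpoch (n - k) * qpoch k) else 0)"

definition mt :: "nat \<Rightarrow> nat" where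
  "mt t = 2 ^ (t - 1)"

definition hpp :: "nat \<Rightarrow> int" where
  "hpp t = (if even t then (2 ^ t - 1) div 3 else (2 ^ t - 2) div 3)"

definition hp :: "nat \<Rightarrow> int" where
  "hp t = (if even t then (2 ^ t - 4) div 3 else (2 ^ t - 5) div 3)"

definition aa :: "nat \<Rightarrow> int" where
  "aa t = (if even t then (2 ^ (t - 1) + 1) div 3 else (2 ^ t + 1) div 3)"

text \<open>Entries larger than n+1 contribute zero terms
  (all q-binomials with top n or n+1 vanish), so they are omitted.\<close>
definition tuples :: "nat \<Rightarrow> nat \<Rightarrow> (nat \<Rightarrow> nat) set" where
  "tuples t n = {j \<in> {1..mt t - 1} \<rightarrow>\<^sub>E {0..n+1}.
                   (3 * (\<Sum>l=1..mt t - 1. l * j l)) mod mt t = 1}"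

definition Fterm :: "nat \<Rightarrow> nat \<Rightarrow> (nat \<Rightarrow> nat) \<Rightarrow> rat fls" where
  "Fterm t n j =
     fls_X_intpow ((- aa t + int (\<Sum>l=1..mt t - 1. l * j l)) div int (mt t)
                   + int (\<Sum>l=1..mt t - 1. j l choose 2))
     * (\<Sum>k=0..mt t - 1. \<Prod>l=1..mt t - 1. qbinom (n + (if l \<le> k then 1 else 0)) (j l))"

definition Ftrunc :: "nat \<Rightarrow> nat \<Rightarrow> rat fls" where
  "Ftrunc t L = (-1) ^ nat (hpp t) * fls_X_intpow (- hp t) *
     (\<Sum>n=0..L. qpoch n * (\<Sum>j\<in>tuples t n. Fterm t n j))"

text \<open>p-dissection: coefficient of x^m in A_{p,t}(L,i,x) is the coefficient of q^(pm+i)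
  in F_t(q;L).\<close>
definition dissect_coeff :: "nat \<Rightarrow> nat \<Rightarrow> nat \<Rightarrow> nat \<Rightarrow> int \<Rightarrow> rat" where
  "dissect_coeff p t L i m = fls_nth (Ftrunc t L) (int p * m + int i)"

definition dissect_at_1mq :: "nat \<Rightarrow> nat \<Rightarrow> nat \<Rightarrow> nat \<Rightarrow> rat fls" where
  "dissect_at_1mq p t L i =
     (\<Sum>m\<in>{m. dissect_coeff p t L i m \<noteq> 0}.
        fls_const (dissect_coeff p t L i m) * (1 - fls_X) powi m)"

definition alpha :: "nat \<Rightarrow> nat \<Rightarrow> nat \<Rightarrow> nat \<Rightarrow> nat \<Rightarrow> rat" where
  "alpha t p n i k = fls_nth (dissect_at_1mq p t (p * n - 1) i) (int k)"

end

theory Submission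
  imports Defs
begin

(*
  For n >= pM the factors 1 - q^(pl), l = 1..M, of (q)_n are all divisible by 1 - q^p, so
  F_t(q; pN-1) - F_t(q; pM-1) = (1 - q^p)^M G(q) with a Laurent polynomial G.  Multiplying by
  1 - q^p acts on every component of the p-dissection as multiplication by 1 - x, which the
  substitution x = 1 - q turns into q.  Hence the components of the two truncations, evaluated
  at x = 1 - q, differ by q^M times a power series, and their coefficients of q^k agree for k < M.
*)

unbundle fps_syntax

text \<open>The support of a formal Laurent series is bounded below, so bounding it above
  singles out the Laurent polynomials.\<close>

definition laurent_poly :: "'a::zero fls \<Rightarrow> bool" where
  "laurent_poly F \<longleftrightarrow> (\<exists>b. \<forall>n>b. F $$ n = 0)"

lemma laurent_poly_finite_support:
  assumes "laurent_poly F"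
  shows "finite {n. F $$ n \<noteq> 0}"
proof -
  obtain b where "\<forall>n>b. F $$ n = 0"
    using assms unfolding laurent_poly_def by blast
  then have "{n. F $$ n \<noteq> 0} \<subseteq> {fls_subdegree F..b}"
    using fls_eq0_below_subdegree[of _ F] by (auto simp: not_less[symmetric])
  then show ?thesis
    by (rule finite_subset) simp
qed

lemma laurent_poly_0: "laurent_poly 0"
  unfolding laurent_poly_def by simp

lemma laurent_poly_1: "laurent_poly 1"
  unfolding laurent_poly_def by (rule exI[of _ 0]) simp

lemma laurent_poly_X_power: "laurent_poly (fls_X ^ k :: 'a::comm_ring_1 fls)"
  unfolding laurent_poly_def by (rule exI[of _ "int k"]) simp

lemma laurent_poly_X_intpow: "laurent_poly (fls_X_intpow i :: 'a::comm_ring_1 fls)"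
  unfolding laurent_poly_def by (rule exI[of _ i]) simp

lemma laurent_poly_add:
  fixes F G :: "'a::monoid_add fls"
  shows "laurent_poly F \<Longrightarrow> laurent_poly G \<Longrightarrow> laurent_poly (F + G)"
  unfolding laurent_poly_def by (metis fls_plus_nth add_0 max.strict_boundedE)

lemma laurent_poly_uminus: "laurent_poly F \<Longrightarrow> laurent_poly (- F :: 'a::group_add fls)"
  unfolding laurent_poly_def by auto

lemma laurent_poly_diff:
  fixes F G :: "'a::group_add fls"
  shows "laurent_poly F \<Longrightarrow> laurent_poly G \<Longrightarrow> laurent_poly (F - G)"
  unfolding laurent_poly_def by (metis fls_minus_nth diff_0 diff_self max.strict_boundedE)

lemma laurent_poly_mult:
  fixes F G :: "'a::comm_ring_1 fls"
  assumes "laurent_poly F" "laurent_poly G"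
  shows "laurent_poly (F * G)"
proof -
  obtain a b where a: "\<forall>n>a. F $$ n = 0" and b: "\<forall>n>b. G $$ n = 0"
    using assms unfolding laurent_poly_def by blast
  have "(F * G) $$ n = 0" if "n > a + b" for n
    unfolding fls_times_nth(2)
  proof (intro sum.neutral ballI)
    fix i
    show "F $$ i * G $$ (n - i) = 0"
      using a b that by (cases "i > a") auto
  qed
  then show ?thesis
    unfolding laurent_poly_def by blast
qed

lemma laurent_poly_sum:
  fixes f :: "'b \<Rightarrow> 'a::comm_monoid_add fls"
  shows "(\<And>x. x \<in> A \<Longrightarrow> laurent_poly (f x)) \<Longrightarrow> laurent_poly (\<Sum>x\<in>A. f x)"
  by (induction A rule: infinite_finite_induct) (auto intro: laurent_poly_add laurent_poly_0)

lemma laurent_poly_prod: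
  fixes f :: "'b \<Rightarrow> 'a::comm_ring_1 fls"
  shows "(\<And>x. x \<in> A \<Longrightarrow> laurent_poly (f x)) \<Longrightarrow> laurent_poly (\<Prod>x\<in>A. f x)"
  by (induction A rule: infinite_finite_induct) (auto intro: laurent_poly_mult laurent_poly_1)

lemma laurent_poly_power:
  "laurent_poly F \<Longrightarrow> laurent_poly (F ^ n :: 'a::comm_ring_1 fls)"
  by (induction n) (auto intro: laurent_poly_mult laurent_poly_1)

lemmas laurent_poly_intros =
  laurent_poly_0 laurent_poly_1 laurent_poly_X_power laurent_poly_X_intpow
  laurent_poly_add laurent_poly_uminus laurent_poly_diff laurent_poly_mult
  laurent_poly_sum laurent_poly_prod laurent_poly_power

lemma one_minus_X_power_nonzero:
  assumes "k > 0"
  shows "(1 - fls_X ^ k :: 'a::comm_ring_1 fls) \<noteq> 0"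
proof
  assume "(1 - fls_X ^ k :: 'a fls) = 0"
  then have "(1 - fls_X ^ k :: 'a fls) $$ 0 = 0"
    by simp
  with assms show False
    by simp
qed

lemma qpoch_0 [simp]: "qpoch 0 = 1"
  by (simp add: qpoch_def)

lemma qpoch_Suc: "qpoch (Suc n) = qpoch n * (1 - fls_X ^ Suc n)"
  by (simp add: qpoch_def prod.cl_ivl_Suc)

lemma qpoch_nonzero: "qpoch n \<noteq> 0"
  unfolding qpoch_def prod_zero_iff[OF finite_atLeastAtMost]
  using one_minus_X_power_nonzero[where 'a=rat] by (simp del: right_minus_eq)

lemma qbinom_0_right [simp]: "qbinom n 0 = 1"
  by (simp add: qbinom_def qpoch_nonzero)

lemma qbinom_Suc_Suc: "qbinom (Suc n) (Suc k) = qbinom n k + fls_X ^ Suc k * qbinom n (Suc k)"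
proof (cases "k < n")
  case True
  then obtain d where d: "n = Suc (k + d)"
    by (metis less_imp_Suc_add add_Suc)
  define x :: "rat fls" where "x = fls_X ^ Suc k"
  define y :: "rat fls" where "y = fls_X ^ Suc d"
  have nonzero: "1 - x \<noteq> 0" "1 - y \<noteq> 0" "qpoch d \<noteq> 0" "qpoch k \<noteq> 0"
    unfolding x_def y_def
    by (simp_all only: one_minus_X_power_nonzero qpoch_nonzero zero_less_Suc not_False_eq_True)
  have binoms: "qbinom (Suc n) (Suc k) = qpoch (Suc n) / (qpoch (Suc d) * qpoch (Suc k))"
    "qbinom n k = qpoch n / (qpoch (Suc d) * qpoch k)"
    "qbinom n (Suc k) = qpoch n / (qpoch d * qpoch (Suc k))"
    using d by (simp_all add: qbinom_def)
  have qpochs: "qpoch (Suc n) = qpoch n * (1 - x * y)"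
    "qpoch (Suc d) = qpoch d * (1 - y)" "qpoch (Suc k) = qpoch k * (1 - x)"
    unfolding x_def y_def qpoch_Suc power_add[symmetric] d by simp_all
  have split: "1 - x * y = (1 - x) + x * (1 - y)"
    by (simp add: algebra_simps)
  show ?thesis
    unfolding binoms qpochs split x_def[symmetric] using nonzero
    by (simp add: distrib_left add_divide_distrib ac_simps)
next
  case False
  then show ?thesis
    by (cases "k = n") (auto simp: qbinom_def qpoch_nonzero)
qed

lemma laurent_poly_qpoch: "laurent_poly (qpoch n)"
  unfolding qpoch_def by (intro laurent_poly_intros)

lemma laurent_poly_qbinom: "laurent_poly (qbinom n k)"
proof (induction n arbitrary: k)
  case 0
  then show ?case
    by (cases k) (simp_all add: qbinom_def laurent_poly_0 laurent_poly_1)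
next
  case (Suc n)
  show ?case
  proof (cases k)
    case 0
    then show ?thesis
      by (simp add: laurent_poly_1)
  next
    case (Suc k')
    show ?thesis
      unfolding \<open>k = Suc k'\<close> qbinom_Suc_Suc by (intro laurent_poly_intros Suc.IH)
  qed
qed

lemma laurent_poly_Fterm: "laurent_poly (Fterm t n j)"
  unfolding Fterm_def by (intro laurent_poly_intros laurent_poly_qbinom)

lemma laurent_poly_Ftrunc: "laurent_poly (Ftrunc t L)"
  unfolding Ftrunc_def by (intro laurent_poly_intros laurent_poly_qpoch laurent_poly_Fterm)

text \<open>Divisibility in the ring of Laurent polynomials (in the field of formal Laurent series
  it would be trivial).\<close>

definition laurent_dvd :: "'a::comm_ring_1 fls \<Rightarrow> 'a fls \<Rightarrow> bool" where
  "laurent_dvd D F \<longleftrightarrow> (\<exists>R. laurent_poly R \<and> F = D * R)"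

lemma laurent_dvd_0: "laurent_dvd D 0"
  unfolding laurent_dvd_def by (auto intro: laurent_poly_0)

lemma laurent_dvd_add:
  "laurent_dvd D F \<Longrightarrow> laurent_dvd D G \<Longrightarrow> laurent_dvd D (F + G)"
  unfolding laurent_dvd_def by (metis distrib_left laurent_poly_add)

lemma laurent_dvd_sum:
  "(\<And>x. x \<in> A \<Longrightarrow> laurent_dvd D (f x)) \<Longrightarrow> laurent_dvd D (\<Sum>x\<in>A. f x)"
  by (induction A rule: infinite_finite_induct) (auto intro: laurent_dvd_add laurent_dvd_0)

lemma laurent_dvd_mult:
  "laurent_dvd D F \<Longrightarrow> laurent_dvd E G \<Longrightarrow> laurent_dvd (D * E) (F * G)"
  unfolding laurent_dvd_def by (metis laurent_poly_mult mult.assoc mult.left_commute)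

lemma laurent_dvd_mult_right:
  "laurent_dvd D F \<Longrightarrow> laurent_poly G \<Longrightarrow> laurent_dvd D (F * G)"
  using laurent_dvd_mult[of D F 1 G] unfolding laurent_dvd_def by simp

lemma laurent_dvd_power_mono:
  assumes "m \<le> n" "laurent_poly D" "laurent_dvd (D ^ n) F"
  shows "laurent_dvd (D ^ m) F"
proof -
  have "D ^ n = D ^ m * D ^ (n - m)"
    using assms(1) by (simp add: power_add[symmetric])
  then show ?thesis
    using assms(2,3) unfolding laurent_dvd_def
    by (metis laurent_poly_mult laurent_poly_power mult.assoc)
qed

lemma laurent_dvd_one_minus_X_power:
  assumes "p dvd n"
  shows "laurent_dvd (1 - fls_X ^ p) (1 - fls_X ^ n :: 'a::comm_ring_1 fls)"
proof -
  obtain q where "n = p * q"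
    using assms by blast
  then have "(1 - fls_X ^ n :: 'a fls) = (1 - fls_X ^ p) * (\<Sum>i<q. (fls_X ^ p) ^ i)"
    by (simp add: power_mult one_diff_power_eq)
  moreover have "laurent_poly (\<Sum>i<q. (fls_X ^ p) ^ i :: 'a fls)"
    by (rule laurent_poly_sum, rule laurent_poly_power, rule laurent_poly_X_power)
  ultimately show ?thesis
    unfolding laurent_dvd_def by blast
qed

lemma laurent_dvd_qpoch: "laurent_dvd ((1 - fls_X ^ p) ^ (n div p)) (qpoch n)"
proof (induction n)
  case 0
  then show ?case
    unfolding laurent_dvd_def by (auto intro: laurent_poly_1)
next
  case (Suc n)
  show ?case
  proof (cases "p dvd Suc n")
    case True
    then have "Suc n div p = Suc (n div p)"
      by (simp add: div_Suc)
    show ?thesis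
      unfolding qpoch_Suc \<open>Suc n div p = Suc (n div p)\<close> power_Suc2[of "1 - fls_X ^ p"]
      by (intro laurent_dvd_mult Suc.IH laurent_dvd_one_minus_X_power True)
  next
    case False
    then have "Suc n div p = n div p"
      by (simp add: div_Suc dvd_eq_mod_eq_0)
    show ?thesis
      unfolding qpoch_Suc \<open>Suc n div p = n div p\<close>
      by (intro laurent_dvd_mult_right Suc.IH laurent_poly_intros)
  qed
qed

lemma Ftrunc_diff_laurent_dvd:
  assumes "L \<le> L'"
  shows "laurent_dvd ((1 - fls_X ^ p) ^ (Suc L div p)) (Ftrunc t L' - Ftrunc t L)"
proof -
  define S where "S n = (\<Sum>j\<in>tuples t n. Fterm t n j)" for n
  define W where "W = ((-1) ^ nat (hpp t) * fls_X_intpow (- hp t) :: rat fls)"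
  have Ftrunc_eq: "Ftrunc t m = W * (\<Sum>n=0..m. qpoch n * S n)" for m
    unfolding Ftrunc_def W_def S_def ..
  obtain d where "L' = L + d"
    using assms le_Suc_ex by blast
  then have "(\<Sum>n=0..L'. qpoch n * S n) =
      (\<Sum>n=0..L. qpoch n * S n) + (\<Sum>n=Suc L..L'. qpoch n * S n)"
    using sum.ub_add_nat[of 0 L "\<lambda>n. qpoch n * S n" d] by simp
  then have diff: "Ftrunc t L' - Ftrunc t L = (\<Sum>n=Suc L..L'. qpoch n * S n) * W"
    unfolding Ftrunc_eq by (simp add: algebra_simps)
  have "laurent_dvd ((1 - fls_X ^ p) ^ (Suc L div p)) (\<Sum>n=Suc L..L'. qpoch n * S n)"
  proof (rule laurent_dvd_sum)
    fix n
    assume "n \<in> {Suc L..L'}"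
    then have "Suc L div p \<le> n div p"
      by (simp add: div_le_mono)
    moreover have "laurent_poly (S n)"
      unfolding S_def by (intro laurent_poly_sum laurent_poly_Fterm)
    ultimately show "laurent_dvd ((1 - fls_X ^ p) ^ (Suc L div p)) (qpoch n * S n)"
      by (intro laurent_dvd_mult_right laurent_dvd_power_mono[OF _ _ laurent_dvd_qpoch])
        (simp_all add: laurent_poly_intros)
  qed
  moreover have "laurent_poly W"
    unfolding W_def by (intro laurent_poly_intros)
  ultimately show ?thesis
    unfolding diff by (rule laurent_dvd_mult_right)
qed

text \<open>\<^term>\<open>dissect p i F\<close> is the coefficient sequence of the \<open>i\<close>-th component of the
  \<open>p\<close>-dissection of \<open>F\<close>, a Laurent polynomial in \<open>x = q\<^sup>p\<close>.\<close>

definition dissect :: "nat \<Rightarrow> nat \<Rightarrow> 'a::zero fls \<Rightarrow> int \<Rightarrow> 'a" where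
  "dissect p i F m = F $$ (int p * m + int i)"

definition eval_one_minus_X :: "(int \<Rightarrow> 'a::field) \<Rightarrow> 'a fls" where
  "eval_one_minus_X c = (\<Sum>m | c m \<noteq> 0. fls_const (c m) * (1 - fls_X) powi m)"

lemma dissect_at_1mq_eq:
  "dissect_at_1mq p t L i = eval_one_minus_X (dissect p i (Ftrunc t L))"
  by (simp add: dissect_at_1mq_def eval_one_minus_X_def dissect_def dissect_coeff_def)

lemma dissect_diff: "dissect p i (F - G) = (\<lambda>m. dissect p i F m - dissect p i G m)"
  by (simp add: dissect_def fun_eq_iff)

lemma finite_dissect_support:
  assumes "p > 0" "laurent_poly F"
  shows "finite {m. dissect p i F m \<noteq> 0}"
proof -
  have "{m. dissect p i F m \<noteq> 0} = (\<lambda>m. int p * m + int i) -` {n. F $$ n \<noteq> 0}"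
    by (auto simp: dissect_def)
  moreover have "inj (\<lambda>m. int p * m + int i)"
    using assms(1) by (auto simp: inj_def)
  ultimately show ?thesis
    using finite_vimageI[OF laurent_poly_finite_support[OF assms(2)]] by simp
qed

lemma dissect_one_minus_X_power_times:
  fixes F :: "'a::comm_ring_1 fls"
  shows "dissect p i ((1 - fls_X ^ p) * F) m = dissect p i F m - dissect p i F (m - 1)"
proof -
  have "(1 - fls_X ^ p) * F = F - fls_shift (- int p) F"
    by (simp add: left_diff_distrib fls_X_power_times_conv_shift)
  moreover have "F $$ (int p * (m - 1) + int i) = F $$ (int p * m + int i - int p)"
    by (simp add: algebra_simps)
  ultimately show ?thesis
    by (simp add: dissect_def)
qed

lemma eval_one_minus_X_eq_sum:
  assumes "finite S" "{m. c m \<noteq> 0} \<subseteq> S"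
  shows "eval_one_minus_X c = (\<Sum>m\<in>S. fls_const (c m) * (1 - fls_X) powi m)"
  unfolding eval_one_minus_X_def
  by (rule sum.mono_neutral_left) (use assms in \<open>auto intro: finite_subset\<close>)

lemma eval_one_minus_X_diff:
  assumes "finite {m. c m \<noteq> 0}" "finite {m. d m \<noteq> 0}"
  shows "eval_one_minus_X (\<lambda>m. c m - d m) = eval_one_minus_X c - eval_one_minus_X d"
proof -
  let ?S = "{m. c m \<noteq> 0} \<union> {m. d m \<noteq> 0}"
  have S: "finite ?S"
    using assms by simp
  have "eval_one_minus_X (\<lambda>m. c m - d m) =
      (\<Sum>m\<in>?S. fls_const (c m - d m) * (1 - fls_X) powi m)"
    by (rule eval_one_minus_X_eq_sum[OF S]) auto
  also have "\<dots> = (\<Sum>m\<in>?S. fls_const (c m) * (1 - fls_X) powi m) -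
      (\<Sum>m\<in>?S. fls_const (d m) * (1 - fls_X) powi m)"
    by (simp add: sum_subtractf[symmetric] fls_minus_const[symmetric] left_diff_distrib)
  also have "\<dots> = eval_one_minus_X c - eval_one_minus_X d"
    by (simp add: eval_one_minus_X_eq_sum[OF S])
  finally show ?thesis .
qed

lemma eval_one_minus_X_shift:
  fixes c :: "int \<Rightarrow> 'a::field"
  assumes "finite {m. c m \<noteq> 0}"
  shows "eval_one_minus_X (\<lambda>m. c (m - 1)) = (1 - fls_X) * eval_one_minus_X c"
proof -
  let ?S = "{m. c m \<noteq> 0}"
  have support: "{m. c (m - 1) \<noteq> 0} = (\<lambda>m. m + 1) ` ?S"
    by (auto simp: image_iff) (metis diff_add_cancel)
  have "(1 - fls_X :: 'a fls) \<noteq> 0"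
    using one_minus_X_power_nonzero[of 1] by simp
  then have "eval_one_minus_X (\<lambda>m. c (m - 1)) =
      (\<Sum>m\<in>?S. (1 - fls_X) * (fls_const (c m) * (1 - fls_X) powi m))"
    unfolding eval_one_minus_X_def support
    by (subst sum.reindex) (auto simp: inj_on_def power_int_add_1 ac_simps)
  then show ?thesis
    unfolding eval_one_minus_X_def by (simp add: sum_distrib_left)
qed

lemma eval_one_minus_X_backward_diff:
  fixes c :: "int \<Rightarrow> 'a::field"
  assumes "finite {m. c m \<noteq> 0}"
  shows "eval_one_minus_X (\<lambda>m. c m - c (m - 1)) = fls_X * eval_one_minus_X c"
proof -
  have "{m. c (m - 1) \<noteq> 0} = (\<lambda>m. m + 1) ` {m. c m \<noteq> 0}"
    by (auto simp: image_iff) (metis diff_add_cancel)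
  then have "finite {m. c (m - 1) \<noteq> 0}"
    using assms by simp
  then show ?thesis
    using assms by (simp add: eval_one_minus_X_diff eval_one_minus_X_shift algebra_simps)
qed

lemma eval_one_minus_X_nth_neg:
  fixes c :: "int \<Rightarrow> 'a::field"
  assumes "n < 0"
  shows "eval_one_minus_X c $$ n = 0"
proof -
  have "fls_subdegree (1 - fls_X :: 'a fls) = 0"
    by (rule fls_subdegree_eqI) auto
  then show ?thesis
    unfolding eval_one_minus_X_def fls_nth_sum using assms by (intro sum.neutral ballI) simp
qed

lemma eval_dissect_one_minus_X_power_times:
  assumes "p > 0" "laurent_poly F"
  shows "eval_one_minus_X (dissect p i ((1 - fls_X ^ p) ^ M * F)) =
    fls_X ^ M * eval_one_minus_X (dissect p i (F :: 'a::field fls))"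
proof (induction M)
  case 0
  then show ?case
    by simp
next
  case (Suc M)
  let ?G = "(1 - fls_X ^ p) ^ M * F"
  have "laurent_poly ?G"
    using assms(2) by (intro laurent_poly_intros)
  then have "eval_one_minus_X (dissect p i ((1 - fls_X ^ p) * ?G)) =
      fls_X * eval_one_minus_X (dissect p i ?G)"
    unfolding dissect_one_minus_X_power_times
    by (intro eval_one_minus_X_backward_diff finite_dissect_support assms(1))
  then show ?case
    using Suc.IH by (simp add: mult.assoc)
qed

lemma eval_dissect_nth_eq_0:
  assumes "p > 0" "laurent_dvd ((1 - fls_X ^ p) ^ M) F" "k < M"
  shows "eval_one_minus_X (dissect p i (F :: 'a::field fls)) $$ int k = 0"
proof -
  obtain G where "laurent_poly G" "F = (1 - fls_X ^ p) ^ M * G"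
    using assms(2) unfolding laurent_dvd_def by blast
  then have "eval_one_minus_X (dissect p i F) = fls_X ^ M * eval_one_minus_X (dissect p i G)"
    using assms(1) by (simp add: eval_dissect_one_minus_X_power_times)
  then show ?thesis
    using assms(3) by (simp add: fls_X_power_times_conv_shift eval_one_minus_X_nth_neg)
qed

theorem lemma4p4:
  fixes t p M N j k :: nat
  assumes "t \<ge> 2" and "prime p" and "p \<ge> 5"
    and "M > 0" and "N > 0" and "j \<le> p - 1"
    and "k \<le> M - 1" and "M - 1 \<le> N - 1"
  shows "alpha t p N j k = alpha t p M j k"
proof -
  have "p > 0"
    using \<open>p \<ge> 5\<close> by simp
  have "M \<le> N"
    using \<open>M > 0\<close> \<open>N > 0\<close> \<open>M - 1 \<le> N - 1\<close> by arith
  then have "p * M - 1 \<le> p * N - 1"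
    by (intro diff_le_mono mult_le_mono2)
  moreover have "Suc (p * M - 1) div p = M"
    using \<open>p > 0\<close> \<open>M > 0\<close> by simp
  ultimately have dvd:
    "laurent_dvd ((1 - fls_X ^ p) ^ M) (Ftrunc t (p * N - 1) - Ftrunc t (p * M - 1))"
    using Ftrunc_diff_laurent_dvd by metis
  have "alpha t p N j k - alpha t p M j k =
      eval_one_minus_X (dissect p j (Ftrunc t (p * N - 1) - Ftrunc t (p * M - 1))) $$ int k"
    using \<open>p > 0\<close> by (simp add: alpha_def dissect_at_1mq_eq dissect_diff eval_one_minus_X_diff
        finite_dissect_support laurent_poly_Ftrunc)
  also have "\<dots> = 0"
    using eval_dissect_nth_eq_0[OF \<open>p > 0\<close> dvd] \<open>M > 0\<close> \<open>k \<le> M - 1\<close> by simp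
  finally show ?thesis
    by simp
qed

end
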